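(* Let $a,b\in\mathbb{C}$ and assume $b=[b]$. Then $\langle[a],b\rangle\ge\langle[a+b],b\rangle$.
   Context: Fix an integer $R\ge2$ and $\theta_g=\pi/R$. Polar rounding on $\mathbb{C}$: for $z=Ae^{i\theta}$, $[z]=[A]e^{i[\theta]}$, where $[A]$ is a fixed real rounding function of the modulus and $[\theta]$ is the multiple of $\theta_g$ closest to $\theta$ (minimal error rounding with deterministic tie-breaking). For $u,v\in\mathbb{C}$ (viewed as vectors in $\mathbb{R}^2$), $\langle u,v\rangle\in[0,\pi]$ denotes the smallest angle between $u$ and $v$. *)

theory Defs
  imports "HOL-Analysis.Analysis"
begin

definition vec_angle :: "complex \<Rightarrow> complex \<Rightarrow> real" where
  "vec_angle u v = arccos ((u \<bullet> v) / (norm u * norm v))"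

text \<open>ar is a minimal-error rounding of angles to the grid of multiples of pi/R
  (any deterministic tie-breaking, i.e. ar is an arbitrary function with these properties).\<close>
definition angle_rounding :: "nat \<Rightarrow> (real \<Rightarrow> real) \<Rightarrow> bool" where
  "angle_rounding R ar \<longleftrightarrow>
     (\<forall>\<theta>. (\<exists>k::int. ar \<theta> = of_int k * (pi / real R)) \<and>
          (\<forall>k::int. \<bar>ar \<theta> - \<theta>\<bar> \<le> \<bar>of_int k * (pi / real R) - \<theta>\<bar>))"

text \<open>Polar rounding: [A e^{i theta}] = [A] e^{i [theta]}, with theta = Arg z in (-pi,pi].\<close>
definition polar_round :: "(real \<Rightarrow> real) \<Rightarrow> (real \<Rightarrow> real) \<Rightarrow> complex \<Rightarrow> complex" where
  "polar_round rm ar z = complex_of_real (rm (cmod z)) * cis (ar (Arg z))"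

end

theory Submission
  imports Defs
begin

(* Write b = r e^{i\<phi>} with r > 0 and \<phi> a multiple of \<pi>/R, and rotate the plane by -\<phi>: b becomes
   the positive real r. Adding a positive real to a vector moves its argument towards 0 without
   crossing it (unless the vector lies on the negative real axis, where the argument is \<pi>).
   Rounding to the grid of multiples of \<pi>/R commutes with this rotation, since \<phi> and 2\<pi> are grid
   points, and it is monotone and fixes 0 and \<pm>\<pi>. Hence the rounded argument of a + b ends up
   no farther from 0 than that of a, and the angle to b is exactly the absolute value of these
   rotated rounded arguments. *)

definition nearest_multiple :: "real \<Rightarrow> real \<Rightarrow> real \<Rightarrow> bool" where
  "nearest_multiple h x \<rho> \<longleftrightarrow>
     (\<exists>k::int. \<rho> = of_int k * h) \<and> (\<forall>k::int. \<bar>\<rho> - x\<bar> \<le> \<bar>of_int k * h - x\<bar>)"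

lemma angle_rounding_nearest_multiple:
  "angle_rounding R ar \<Longrightarrow> nearest_multiple (pi / real R) \<theta> (ar \<theta>)"
  unfolding angle_rounding_def nearest_multiple_def by blast

lemma nearest_multiple_shift:
  assumes "nearest_multiple h x \<rho>" and "c = of_int j * h"
  shows "nearest_multiple h (x - c) (\<rho> - c)"
  unfolding nearest_multiple_def
proof (intro conjI allI)
  obtain k where "\<rho> = of_int k * h" using assms(1) unfolding nearest_multiple_def by blast
  then show "\<exists>k::int. \<rho> - c = of_int k * h"
    using assms(2) by (intro exI[of _ "k - j"]) (simp add: algebra_simps)
next
  fix k :: int
  have "\<bar>\<rho> - x\<bar> \<le> \<bar>of_int (k + j) * h - x\<bar>" using assms(1) unfolding nearest_multiple_def by blast
  then show "\<bar>\<rho> - c - (x - c)\<bar> \<le> \<bar>of_int k * h - (x - c)\<bar>"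
    using assms(2) by (simp add: algebra_simps)
qed

lemma nearest_multiple_mono:
  assumes "nearest_multiple h x1 \<rho>1" "nearest_multiple h x2 \<rho>2" "x1 < x2"
  shows "\<rho>1 \<le> \<rho>2"
proof -
  obtain k1 k2 where "\<rho>1 = of_int k1 * h" "\<rho>2 = of_int k2 * h"
    using assms(1,2) unfolding nearest_multiple_def by blast
  then have "\<bar>\<rho>1 - x1\<bar> \<le> \<bar>\<rho>2 - x1\<bar>" "\<bar>\<rho>2 - x2\<bar> \<le> \<bar>\<rho>1 - x2\<bar>"
    using assms(1,2) unfolding nearest_multiple_def by blast+
  then show ?thesis using assms(3) by (auto simp: abs_if split: if_splits)
qed

lemma nearest_multiple_le:
  assumes "nearest_multiple h x \<rho>" "x \<le> of_int k * h"
  shows "\<rho> \<le> of_int k * h"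
proof -
  have "\<bar>\<rho> - x\<bar> \<le> \<bar>of_int k * h - x\<bar>" using assms(1) unfolding nearest_multiple_def by blast
  then show ?thesis using assms(2) by linarith
qed

lemma nearest_multiple_ge:
  assumes "nearest_multiple h x \<rho>" "of_int k * h \<le> x"
  shows "of_int k * h \<le> \<rho>"
proof -
  have "\<bar>\<rho> - x\<bar> \<le> \<bar>of_int k * h - x\<bar>" using assms(1) unfolding nearest_multiple_def by blast
  then show ?thesis using assms(2) by linarith
qed

lemma nearest_multiple_multiple:
  "nearest_multiple h (of_int k * h) \<rho> \<Longrightarrow> \<rho> = of_int k * h"
  using nearest_multiple_le[of h _ \<rho> k] nearest_multiple_ge[of h _ \<rho> k] by fastforce

lemma nearest_multiple_abs_le:
  assumes "nearest_multiple h x \<rho>x" "nearest_multiple h y \<rho>y"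
    and "(0 \<le> y \<and> y < x) \<or> (x < y \<and> y \<le> 0)"
  shows "\<bar>\<rho>y\<bar> \<le> \<bar>\<rho>x\<bar>"
  using assms nearest_multiple_mono[OF assms(1,2)] nearest_multiple_mono[OF assms(2,1)]
    nearest_multiple_le[OF assms(2), of 0] nearest_multiple_ge[OF assms(2), of 0]
  by auto

lemma nearest_multiple_cos_le:
  assumes "nearest_multiple (pi / real R) x \<rho>x" "nearest_multiple (pi / real R) y \<rho>y"
    and "R > 0" "- pi < x" "x \<le> pi"
    and "x = pi \<or> y = 0 \<or> (0 \<le> y \<and> y < x) \<or> (x < y \<and> y \<le> 0)"
  shows "cos \<rho>x \<le> cos \<rho>y"
proof -
  have pi_grid: "pi = of_int (int R) * (pi / real R)" "- pi = of_int (- int R) * (pi / real R)"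
    using assms(3) by simp_all
  have bound: "\<bar>\<rho>x\<bar> \<le> pi"
    using nearest_multiple_le[OF assms(1), of "int R"] nearest_multiple_ge[OF assms(1), of "- int R"]
      assms(4,5) pi_grid by linarith
  consider "x = pi" | "y = 0" | "(0 \<le> y \<and> y < x) \<or> (x < y \<and> y \<le> 0)"
    using assms(6) by blast
  then show ?thesis
  proof cases
    case 1
    then have "\<rho>x = pi" using nearest_multiple_multiple assms(1) pi_grid(1) by metis
    then show ?thesis by simp
  next
    case 2
    then have "\<rho>y = 0" using nearest_multiple_multiple[of "pi / real R" 0] assms(2) by simp
    then show ?thesis by simp
  next
    case 3
    then have "cos \<bar>\<rho>x\<bar> \<le> cos \<bar>\<rho>y\<bar>"
      using nearest_multiple_abs_le[OF assms(1,2)] bound by (intro cos_monotone_0_pi_le) auto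
    then show ?thesis by simp
  qed
qed

lemma sin_neg_lt_zero: "- pi < t \<Longrightarrow> t < 0 \<Longrightarrow> sin t < 0"
  using sin_gt_zero[of "- t"] by simp

lemma cis_add_pos_real_angle_decreases:
  assumes eq: "complex_of_real A * cis x + complex_of_real r = complex_of_real S * cis y"
    and "A \<ge> 0" "S \<ge> 0" "r > 0" "- pi \<le> x" "x \<le> pi" "- pi \<le> y" "y \<le> pi" "0 < sin x"
  shows "0 \<le> y \<and> y < x"
proof -
  have re: "A * cos x + r = S * cos y" and im: "A * sin x = S * sin y"
    using arg_cong[OF eq, of Re] arg_cong[OF eq, of Im] by simp_all
  have x: "0 < x" "x < pi"
    using assms(5,6,9) sin_neg_lt_zero[of x] by (cases "x = - pi \<or> x = 0 \<or> x = pi"; force)+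
  have key: "S * sin (x - y) = r * sin x"
  proof -
    have "S * sin (x - y) = sin x * (S * cos y) - cos x * (S * sin y)"
      by (simp add: sin_diff algebra_simps)
    also have "\<dots> = r * sin x" unfolding re[symmetric] im[symmetric] by (simp add: algebra_simps)
    finally show ?thesis .
  qed
  then have "0 < S * sin (x - y)" using assms(4,9) by simp
  then have "S > 0" "0 < sin (x - y)" using assms(3) by (auto simp: zero_less_mult_iff)
  have y: "- pi < y" "y < pi"
  proof -
    have "cos y \<noteq> -1" if "sin y = 0"
    proof -
      have "A = 0" using im assms(9) that by simp
      then show ?thesis using re assms(4) \<open>S > 0\<close> by auto
    qed
    then show "- pi < y" "y < pi" using assms(7,8) by (cases "y = - pi \<or> y = pi"; force)+
  qed
  have "0 \<le> S * sin y" using im assms(2,9) by (metis less_imp_le mult_nonneg_nonneg)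
  then have "0 \<le> sin y" using \<open>S > 0\<close> by (simp add: zero_le_mult_iff)
  then have "0 \<le> y" using sin_neg_lt_zero[of y] y(1) by linarith
  moreover have "y < x"
    using sin_neg_lt_zero[of "x - y"] \<open>0 < sin (x - y)\<close> x y \<open>0 \<le> y\<close> by (cases "x = y") force+
  ultimately show ?thesis ..
qed

lemma cis_add_pos_real_angle_cases:
  assumes eq: "complex_of_real A * cis x + complex_of_real r = complex_of_real S * cis y"
    and "A \<ge> 0" "S \<ge> 0" "r > 0" "- pi < x" "x \<le> pi" "- pi < y" "y \<le> pi"
  shows "x = pi \<or> y = 0 \<or> (0 \<le> y \<and> y < x) \<or> (x < y \<and> y \<le> 0)"
proof -
  consider "0 < sin x" | "sin x < 0" | "sin x = 0" by linarith
  then show ?thesis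
  proof cases
    case 1
    then show ?thesis using cis_add_pos_real_angle_decreases[OF eq] assms by simp
  next
    case 2
    have "complex_of_real A * cis (- x) + complex_of_real r = complex_of_real S * cis (- y)"
      using arg_cong[OF eq, of cnj] by (simp add: cis_cnj)
    then have "0 \<le> - y \<and> - y < - x"
      by (rule cis_add_pos_real_angle_decreases) (use 2 assms(2-8) in simp_all)
    then show ?thesis by simp
  next
    case 3
    then consider "x = 0" | "x = pi" using sin_eq_0_pi[of x] assms(5,6) by fastforce
    then show ?thesis
    proof cases
      case 1
      then have re: "S * cos y = A + r" and im: "S * sin y = 0"
        using arg_cong[OF eq, of Re] arg_cong[OF eq, of Im] by simp_all
      have "0 < S * cos y" unfolding re using assms(2,4) by simp
      then have "0 < S" "0 < cos y" using assms(3) by (simp_all add: zero_less_mult_iff)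
      moreover from this(1) have "sin y = 0" using im by simp
      ultimately show ?thesis using sin_eq_0_pi[of y] assms(7,8) by (cases "y = pi") auto
    qed simp
  qed
qed

lemma vec_angle_polar:
  assumes "c > 0" "r > 0"
  shows "vec_angle (complex_of_real c * cis t) (complex_of_real r * cis p) = arccos (cos (t - p))"
proof -
  have "(complex_of_real c * cis t) \<bullet> (complex_of_real r * cis p) = c * r * cos (t - p)"
    by (simp add: inner_complex_def cos_diff algebra_simps)
  moreover have "norm (complex_of_real c * cis t) = c" "norm (complex_of_real r * cis p) = r"
    using assms by (simp_all add: norm_mult)
  ultimately show ?thesis using assms unfolding vec_angle_def by simp
qed

lemma vec_angle_polar_round:
  assumes "\<forall>A\<ge>0. rm A \<ge> 0" "polar_round rm ar z \<noteq> 0" "r > 0"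
  shows "vec_angle (polar_round rm ar z) (complex_of_real r * cis \<phi>) = arccos (cos (ar (Arg z) - \<phi>))"
proof -
  have "rm (cmod z) > 0"
    using assms(1,2) unfolding polar_round_def by (metis less_eq_real_def mult_eq_0_iff norm_ge_zero of_real_0)
  then show ?thesis unfolding polar_round_def using vec_angle_polar assms(3) by blast
qed

lemma angle_rounding_reduced:
  assumes "angle_rounding R ar" "R > 0" "\<phi> = of_int k * (pi / real R)"
  obtains x \<rho> where "- pi < x" "x \<le> pi" "cis x = cis (\<theta> - \<phi>)"
    "nearest_multiple (pi / real R) x \<rho>" "cos \<rho> = cos (ar \<theta> - \<phi>)"
proof -
  obtain m :: int where m: "\<theta> - \<phi> - of_int m * (2 * pi) = Arg (cis (\<theta> - \<phi>))"
    using Arg_exp_diff_2pi[of "\<i> * complex_of_real (\<theta> - \<phi>)"] by (auto simp: cis_conv_exp)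
  define c where "c = \<phi> + of_int m * (2 * pi)"
  have "c = of_int (k + 2 * int R * m) * (pi / real R)"
    using assms(2,3) unfolding c_def by (simp add: field_simps)
  then have "nearest_multiple (pi / real R) (\<theta> - c) (ar \<theta> - c)"
    using nearest_multiple_shift angle_rounding_nearest_multiple[OF assms(1)] by blast
  moreover have Arg: "\<theta> - c = Arg (cis (\<theta> - \<phi>))" unfolding c_def using m by simp
  then have "- pi < \<theta> - c" "\<theta> - c \<le> pi" using Arg_bounded by simp_all
  moreover have "cis (\<theta> - c) = cis (\<theta> - \<phi>)" unfolding Arg by (simp add: cis_Arg sgn_div_norm)
  moreover have "cos (ar \<theta> - c) = cos (ar \<theta> - \<phi>)"
    unfolding c_def diff_diff_eq[symmetric] cos_diff[of "ar \<theta> - \<phi>"] mult.commute[of "of_int m"]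
    by simp
  ultimately show ?thesis using that by blast
qed

lemma polar_sum_rotate:
  assumes "b = complex_of_real r * cis \<phi>"
    and "cis x = cis (Arg a - \<phi>)" "cis y = cis (Arg (a + b) - \<phi>)"
  shows "complex_of_real (cmod a) * cis x + complex_of_real r = complex_of_real (cmod (a + b)) * cis y"
proof -
  note polar = rcis_cmod_Arg[unfolded rcis_def]
  have "complex_of_real (cmod a) * cis x + complex_of_real r = (a + b) / cis \<phi>"
    by (subst (2) polar[symmetric]) (simp add: assms cis_divide[symmetric] field_simps)
  also have "\<dots> = complex_of_real (cmod (a + b)) * cis y"
    by (subst polar[symmetric]) (simp add: assms(3) cis_divide[symmetric])
  finally show ?thesis .
qed

theorem lemma22:
  fixes R :: nat and rm ar :: "real \<Rightarrow> real" and a b :: complex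
  assumes "R \<ge> 2"
    and "angle_rounding R ar"
    and "\<forall>A\<ge>0. rm A \<ge> 0"
    and "b = polar_round rm ar b"
    and "b \<noteq> 0" and "polar_round rm ar a \<noteq> 0" and "polar_round rm ar (a + b) \<noteq> 0"
  shows "vec_angle (polar_round rm ar a) b \<ge> vec_angle (polar_round rm ar (a + b)) b"
proof -
  have "R > 0" using assms(1) by simp
  define r \<phi> where "r = rm (cmod b)" and "\<phi> = ar (Arg b)"
  have b: "b = complex_of_real r * cis \<phi>"
    using assms(4) unfolding polar_round_def r_def \<phi>_def .
  have "r > 0"
    using assms(3,5) b unfolding r_def by (metis less_eq_real_def mult_zero_left norm_ge_zero of_real_0)
  obtain k where "\<phi> = of_int k * (pi / real R)"
    using assms(2) unfolding angle_rounding_def \<phi>_def by blast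
  note reduce = angle_rounding_reduced[OF assms(2) \<open>R > 0\<close> this]
  obtain x \<rho>a where x: "- pi < x" "x \<le> pi" "cis x = cis (Arg a - \<phi>)"
    and \<rho>a: "nearest_multiple (pi / real R) x \<rho>a" "cos \<rho>a = cos (ar (Arg a) - \<phi>)"
    by (rule reduce)
  obtain y \<rho>s where y: "- pi < y" "y \<le> pi" "cis y = cis (Arg (a + b) - \<phi>)"
    and \<rho>s: "nearest_multiple (pi / real R) y \<rho>s" "cos \<rho>s = cos (ar (Arg (a + b)) - \<phi>)"
    by (rule reduce)
  have "complex_of_real (cmod a) * cis x + complex_of_real r = complex_of_real (cmod (a + b)) * cis y"
    using b x(3) y(3) by (rule polar_sum_rotate)
  then have "cos \<rho>a \<le> cos \<rho>s"
    using nearest_multiple_cos_le[OF \<rho>a(1) \<rho>s(1) \<open>R > 0\<close> x(1,2)] cis_add_pos_real_angle_cases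
      \<open>r > 0\<close> x(1,2) y(1,2) by simp
  moreover have "vec_angle (polar_round rm ar a) b = arccos (cos \<rho>a)"
    "vec_angle (polar_round rm ar (a + b)) b = arccos (cos \<rho>s)"
    using vec_angle_polar_round[OF assms(3) _ \<open>r > 0\<close>] assms(6,7) \<rho>a(2) \<rho>s(2) b by metis+
  ultimately show ?thesis by (simp add: arccos_le_arccos)
qed

end
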